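(* Assume the growth hypotheses described in the context, and in addition that $\int|x|^p\mu(dx)<\infty$ and that $c_1,c_2,a_+,a_-$ have growth of order at most $p$ (i.e. $|c_1(x)|+a_+(x)+a_-(x)\le M(1+|x|^p)$ and $|c_2(y)|\le M(1+|y|^p)$ for some $M$). Then there is a constant $K$ such that for every $f\in L^1(\mu)$ for which $f^c,f^{cc}$ are well defined and $f^c\in L^1(\nu)$, $$|f^{cc}(x)|\le\mu(f^-)+\nu((f^c)^-)+K(1+|x|^p),\qquad x\in\mathsf{X},$$ with $K$ independent of $f$. If $c$ is replaced by $c/\varepsilon$ with $\varepsilon\in(0,1)$ (and $c_1,c_2,\hat c,a_\pm,K^i_\pm$ correspondingly divided by $\varepsilon$), the corresponding bound holds with constant $\tilde K:=\varepsilon^{-\max\{p/\alpha,1\}}K$, where $\alpha:=\min_i\tilde\alpha_i=p-\max_i\beta_i$.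
   Context: $(\mathsf{X},d_{\mathsf{X}})$, $(\mathsf{Y},d_{\mathsf{Y}})$ are Polish metric spaces with reference points $x_0,y_0$; $|x|:=d_{\mathsf{X}}(x,x_0)$, $|y|:=d_{\mathsf{Y}}(y,y_0)$. $\mu\in\mathcal{P}(\mathsf{X})$, $\nu\in\mathcal{P}(\mathsf{Y})$, $c:\mathsf{X}\times\mathsf{Y}\to\mathbb{R}$ measurable; $\mu(h):=\int h\,d\mu$, $h^-=\max(-h,0)$. Conjugates: for measurable $f:\mathsf{X}\to[-\infty,\infty]$, $f^c(y):=-\log\int e^{f(x)-c(x,y)}\mu(dx)$ and $f^{cc}(x):=-\log\int e^{f^c(y)-c(x,y)}\nu(dy)$ (when the integrals are well defined). Growth hypotheses: fix $p>0$ with $\int e^{\lambda|y|^p}\nu(dy)<\infty$ for some $\lambda>0$; fix $N\ge0$ and $\alpha_i\in[0,p]$, $\beta_i\in[0,p)$ with $\alpha_i+\beta_i\le p$ ($1\le i\le N$), and set $\tilde\alpha_i:=p-\beta_i$. The cost has the form $c(x,y)=c_1(x)+c_2(y)+\hat c(x,y)$ with $c_1\in L^1(\mu)$, $c_2\in L^1(\nu)$ and $-a_-(x)-\sum_{i=1}^NK_-^i|x|^{\alpha_i}|y|^{\beta_i}\le\hat c(x,y)\le a_+(x)+\sum_{i=1}^NK_+^i|x|^{\alpha_i}|y|^{\beta_i}$, where $K_\pm^i\ge0$ and $a_\pm\ge0$ are measurable with $A_+:=\int a_+d\mu<\infty$. *)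

theory Defs
  imports "HOL-Probability.Probability"
begin

text \<open>Real power with the convention 0^0 = 1 (for nonnegative bases), used for
  the terms |x|^alpha_i |y|^beta_i where the exponents may vanish.\<close>
definition pw :: "real \<Rightarrow> real \<Rightarrow> real" where
  "pw t a = (if a = 0 then 1 else t powr a)"

definition eexp :: "ereal \<Rightarrow> ennreal" where
  "eexp t = (case t of ereal r \<Rightarrow> ennreal (exp r) | PInfty \<Rightarrow> \<infinity> | MInfty \<Rightarrow> 0)"

definition eln :: "ennreal \<Rightarrow> ereal" where
  "eln t = (if t = 0 then -\<infinity> else if t = \<infinity> then \<infinity> else ereal (ln (enn2real t)))"

definition cconj :: "'a measure \<Rightarrow> ('a \<Rightarrow> 'b \<Rightarrow> real) \<Rightarrow> ('a \<Rightarrow> ereal) \<Rightarrow> 'b \<Rightarrow> ereal" where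
  "cconj mu c f y = - eln (\<integral>\<^sup>+ x. eexp (f x - ereal (c x y)) \<partial>mu)"

text \<open>g^{c}(x) on the other side: - log \<integral> e^{g(y) - c(x,y)} nu(dy); f^cc = ccconj nu c (cconj mu c f)\<close>
definition ccconj :: "'b measure \<Rightarrow> ('a \<Rightarrow> 'b \<Rightarrow> real) \<Rightarrow> ('b \<Rightarrow> ereal) \<Rightarrow> 'a \<Rightarrow> ereal" where
  "ccconj nu c g x = - eln (\<integral>\<^sup>+ y. eexp (g y - ereal (c x y)) \<partial>nu)"

definition negpart :: "real \<Rightarrow> real" where
  "negpart t = max (- t) 0"

definition ereal_L1 :: "'b measure \<Rightarrow> ('b \<Rightarrow> ereal) \<Rightarrow> bool" where
  "ereal_L1 M g \<longleftrightarrow> g \<in> borel_measurable M \<and> (AE y in M. \<bar>g y\<bar> \<noteq> \<infinity>)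
     \<and> integrable M (\<lambda>y. real_of_ereal (g y))"

definition conj_bound :: "'a measure \<Rightarrow> 'b measure \<Rightarrow> ('a \<Rightarrow> 'b \<Rightarrow> real) \<Rightarrow> 'a::metric_space
    \<Rightarrow> real \<Rightarrow> real \<Rightarrow> bool" where
  "conj_bound mu nu c x0 p K \<longleftrightarrow>
    (\<forall>f. integrable mu f \<longrightarrow> ereal_L1 nu (cconj mu c (\<lambda>x. ereal (f x))) \<longrightarrow>
       (\<forall>z. \<bar>ccconj nu c (cconj mu c (\<lambda>x. ereal (f x))) z\<bar>
          \<le> ereal ((\<integral>x. negpart (f x) \<partial>mu)
                   + (\<integral>y. negpart (real_of_ereal (cconj mu c (\<lambda>x. ereal (f x)) y)) \<partial>nu)
                   + K * (1 + dist z x0 powr p))))"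

end

theory Submission
  imports Defs
begin

text \<open>Jensen's inequality \<open>exp (\<integral>g) \<le> \<integral>exp g\<close> gives \<open>f\<^sup>c(y) \<le> \<mu>(f\<^sup>-) + \<mu>(c(\<cdot>,y))\<close> and
  \<open>f\<^sup>c\<^sup>c(x) \<le> \<nu>((f\<^sup>c)\<^sup>-) + \<nu>(c(x,\<cdot>))\<close>, and the last integral is \<open>O(1+|x|\<^sup>p)\<close> by the growth
  conditions. For the lower bound, the first estimate is inserted into the definition of
  \<open>f\<^sup>c\<^sup>c(x)\<close>: Young's inequality splits each cross term \<open>|x|^\<alpha>\<^sub>i |y|^\<beta>\<^sub>i\<close> into a small multiple of
  \<open>|y|\<^sup>p\<close>, absorbed by the exponential moment of \<open>\<nu>\<close>, and a multiple of \<open>1+|x|\<^sup>p\<close>. Replacing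
  \<open>c\<close> by \<open>s c\<close> with \<open>s = 1/\<epsilon> \<ge> 1\<close> multiplies the Young constants by at most
  \<open>s^(p/(p - max\<^sub>i \<beta>\<^sub>i))\<close> and all other constants by \<open>s\<close>.\<close>

lemma integral_le_nn_integral:
  fixes h :: "'a \<Rightarrow> real"
  assumes "integrable M h"
  shows "ennreal (integral\<^sup>L M h) \<le> (\<integral>\<^sup>+ x. ennreal (h x) \<partial>M)"
proof -
  have "integral\<^sup>L M h \<le> integral\<^sup>L M (\<lambda>x. max 0 (h x))"
    using assms by (intro integral_mono) auto
  then have "ennreal (integral\<^sup>L M h) \<le> ennreal (integral\<^sup>L M (\<lambda>x. max 0 (h x)))"
    by (rule ennreal_leI)
  also have "\<dots> = (\<integral>\<^sup>+ x. ennreal (max 0 (h x)) \<partial>M)"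
    using assms by (intro nn_integral_eq_integral[symmetric]) auto
  also have "\<dots> = (\<integral>\<^sup>+ x. ennreal (h x) \<partial>M)"
    by (intro nn_integral_cong) (simp add: max_def ennreal_neg)
  finally show ?thesis .
qed

text \<open>Jensen's inequality for \<open>exp\<close>, proved through the tangent line of \<open>exp\<close> at the mean,
  so that no integrability of \<open>exp \<circ> g\<close> is needed.\<close>
lemma (in prob_space) exp_expectation_le_nn_integral_exp:
  assumes "integrable M g"
  shows "ennreal (exp (expectation g)) \<le> (\<integral>\<^sup>+ x. ennreal (exp (g x)) \<partial>M)"
proof -
  define m where "m = expectation g"
  have tangent: "exp m * (1 + g x - m) \<le> exp (g x)" for x
  proof -
    have "exp m * (1 + (g x - m)) \<le> exp m * exp (g x - m)"
      by (intro mult_left_mono exp_ge_add_one_self) simp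
    then show ?thesis by (simp add: exp_diff algebra_simps)
  qed
  have "expectation (\<lambda>x. exp m * (1 + g x - m)) = exp m"
    using assms by (simp add: m_def prob_space algebra_simps)
  then have "ennreal (exp m) = ennreal (expectation (\<lambda>x. exp m * (1 + g x - m)))"
    by simp
  also have "\<dots> \<le> (\<integral>\<^sup>+ x. ennreal (exp m * (1 + g x - m)) \<partial>M)"
    using assms by (intro integral_le_nn_integral) auto
  also have "\<dots> \<le> (\<integral>\<^sup>+ x. ennreal (exp (g x)) \<partial>M)"
    by (intro nn_integral_mono ennreal_leI tangent)
  finally show ?thesis by (simp add: m_def)
qed

lemma ereal_le_eln: "ennreal (exp a) \<le> I \<Longrightarrow> ereal a \<le> eln I"
proof (cases "I = \<infinity>")
  case False
  assume le: "ennreal (exp a) \<le> I"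
  then have "I \<noteq> 0"
    using less_le_trans[of 0 "ennreal (exp a)" I] by auto
  moreover have "exp a \<le> enn2real I"
    using enn2real_mono[OF le] False by (simp add: top.not_eq_extremum)
  then have "a \<le> ln (enn2real I)"
    by (subst ln_ge_iff) (auto intro: less_le_trans[OF exp_gt_zero])
  ultimately show ?thesis
    using False by (simp add: eln_def)
qed (simp add: eln_def)

lemma eln_le_ereal: "I \<le> ennreal (exp b) \<Longrightarrow> eln I \<le> ereal b"
proof (cases "I = 0")
  case False
  assume le: "I \<le> ennreal (exp b)"
  then have fin: "I < \<infinity>"
    using le_less_trans[OF le ennreal_less_top] by simp
  have "enn2real I \<le> exp b"
    using enn2real_mono[OF le] by simp
  moreover have "0 < enn2real I"
    using False fin by (simp add: enn2real_positive_iff zero_less_iff_neq_zero)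
  ultimately have "ln (enn2real I) \<le> ln (exp b)"
    by (intro ln_mono)
  then have "ln (enn2real I) \<le> b"
    by simp
  then show ?thesis
    using False fin by (simp add: eln_def)
qed (simp add: eln_def)

lemma eexp_ereal [simp]: "eexp (ereal r) = ennreal (exp r)"
  by (simp add: eexp_def)

lemma eexp_mono: "a \<le> b \<Longrightarrow> eexp a \<le> eexp b"
  by (cases a; cases b) (auto simp: eexp_def ennreal_leI)

lemma ccconj_eq_cconj: "ccconj nu c g x = cconj nu (\<lambda>y x. c x y) g x"
  by (simp add: ccconj_def cconj_def)

lemma cconj_le_integral:
  assumes "prob_space M" and "integrable M f" and "integrable M (\<lambda>x. c x y)"
    and "AE x in M. g x = ereal (f x)"
  shows "cconj M c g y \<le> ereal ((\<integral>x. c x y \<partial>M) - integral\<^sup>L M f)"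
proof -
  interpret prob_space M by fact
  have "integrable M (\<lambda>x. f x - c x y)"
    using assms(2,3) by auto
  then have "ennreal (exp (\<integral>x. f x - c x y \<partial>M)) \<le> (\<integral>\<^sup>+ x. ennreal (exp (f x - c x y)) \<partial>M)"
    by (rule exp_expectation_le_nn_integral_exp)
  also have "\<dots> = (\<integral>\<^sup>+ x. eexp (g x - ereal (c x y)) \<partial>M)"
    using assms(4) by (intro nn_integral_cong_AE) (auto elim!: eventually_mono)
  finally have "ereal (\<integral>x. f x - c x y \<partial>M) \<le> eln (\<integral>\<^sup>+ x. eexp (g x - ereal (c x y)) \<partial>M)"
    by (rule ereal_le_eln)
  then have "cconj M c g y \<le> ereal (- (\<integral>x. f x - c x y \<partial>M))"
    unfolding cconj_def by (simp add: ereal_uminus_le_reorder)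
  also have "- (\<integral>x. f x - c x y \<partial>M) = (\<integral>x. c x y \<partial>M) - integral\<^sup>L M f"
    using assms(2,3) by simp
  finally show ?thesis .
qed

lemma cconj_ge:
  assumes w: "integrable M (\<lambda>x. exp (w x))" "0 < (\<integral>x. exp (w x) \<partial>M)"
    and bound: "\<And>x. g x - ereal (c x y) \<le> ereal (\<Phi> + w x)"
  shows "- ereal (\<Phi> + ln (\<integral>x. exp (w x) \<partial>M)) \<le> cconj M c g y"
proof -
  define J where "J = (\<integral>x. exp (w x) \<partial>M)"
  have "(\<integral>\<^sup>+ x. eexp (g x - ereal (c x y)) \<partial>M) \<le> (\<integral>\<^sup>+ x. ennreal (exp \<Phi>) * ennreal (exp (w x)) \<partial>M)"
  proof (intro nn_integral_mono)
    fix x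
    have "eexp (g x - ereal (c x y)) \<le> eexp (ereal (\<Phi> + w x))"
      by (intro eexp_mono bound)
    then show "eexp (g x - ereal (c x y)) \<le> ennreal (exp \<Phi>) * ennreal (exp (w x))"
      by (simp add: exp_add ennreal_mult)
  qed
  also have "\<dots> = ennreal (exp \<Phi>) * (\<integral>\<^sup>+ x. ennreal (exp (w x)) \<partial>M)"
    by (intro nn_integral_cmult measurable_compose[OF borel_measurable_integrable[OF w(1)]
        measurable_ennreal])
  also have "(\<integral>\<^sup>+ x. ennreal (exp (w x)) \<partial>M) = ennreal J"
    unfolding J_def using w(1) by (intro nn_integral_eq_integral) auto
  also have "ennreal (exp \<Phi>) * ennreal J = ennreal (exp (\<Phi> + ln J))"
    using w(2) by (simp add: J_def exp_add ennreal_mult[symmetric])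
  finally have "eln (\<integral>\<^sup>+ x. eexp (g x - ereal (c x y)) \<partial>M) \<le> ereal (\<Phi> + ln J)"
    by (rule eln_le_ereal)
  then show ?thesis
    unfolding cconj_def J_def ereal_minus_le_minus .
qed

lemma abs_ereal_le_if_bounds:
  fixes t :: ereal
  assumes "t \<le> ereal a" and "- ereal b \<le> t" and "a \<le> C" and "b \<le> C"
  shows "\<bar>t\<bar> \<le> ereal C"
  using assms by (cases t) auto

lemma integral_ge_neg_integral_negpart:
  assumes "integrable M f"
  shows "- (\<integral>x. negpart (f x) \<partial>M) \<le> integral\<^sup>L M f"
proof -
  have "(\<integral>x. - negpart (f x) \<partial>M) \<le> integral\<^sup>L M f"
    using assms by (intro integral_mono) (auto simp: negpart_def)
  then show ?thesis by simp
qed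

lemma pw_nonneg: "0 \<le> pw t a"
  by (simp add: pw_def)

lemma pw_le_one_plus_powr_powr:
  assumes "0 \<le> t" "0 \<le> \<alpha>" "\<alpha> \<le> p" "0 < p"
  shows "pw t \<alpha> \<le> (1 + t powr p) powr (\<alpha> / p)"
proof (cases "\<alpha> = 0")
  case True
  have "0 < 1 + t powr p" by (simp add: add_pos_nonneg)
  then show ?thesis using True by (simp add: pw_def)
next
  case False
  have "pw t \<alpha> = (t powr p) powr (\<alpha> / p)"
    using False assms by (simp add: pw_def powr_powr)
  also have "\<dots> \<le> (1 + t powr p) powr (\<alpha> / p)"
    using assms by (intro powr_mono2) auto
  finally show ?thesis .
qed

lemma pw_le_one_plus_powr:
  assumes "0 \<le> t" "0 \<le> \<alpha>" "\<alpha> \<le> p" "0 < p"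
  shows "pw t \<alpha> \<le> 1 + t powr p"
proof -
  have "pw t \<alpha> \<le> (1 + t powr p) powr (\<alpha> / p)" by (rule pw_le_one_plus_powr_powr[OF assms])
  also have "\<dots> \<le> (1 + t powr p) powr 1"
    using assms by (intro powr_mono) auto
  also have "\<dots> = 1 + t powr p"
    by (simp add: add_nonneg_nonneg)
  finally show ?thesis .
qed

text \<open>Young's inequality for the exponents \<open>p/\<beta>\<close> and \<open>p/(p-\<beta>)\<close>, proved by comparing \<open>a\<close>
  with \<open>\<delta> t^(p-\<beta>)\<close>.\<close>
lemma mult_pw_le_young:
  assumes a: "0 \<le> a" and d: "0 < \<delta>" and t: "0 \<le> t" and b: "0 \<le> \<beta>" "\<beta> < p"
  shows "a * pw t \<beta> \<le> \<delta> * t powr p + a powr (p / (p - \<beta>)) * \<delta> powr (- \<beta> / (p - \<beta>))"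
proof (cases "\<beta> = 0")
  case True
  have "0 \<le> \<delta> * t powr p" using d by simp
  moreover have "p \<noteq> 0" using b True by simp
  ultimately show ?thesis using True a d by (simp add: pw_def)
next
  case False
  define q where "q = p - \<beta>"
  have q: "0 < q" using b by (simp add: q_def)
  have pw: "pw t \<beta> = t powr \<beta>" using False by (simp add: pw_def)
  have R: "0 \<le> a powr (p / q) * \<delta> powr (- \<beta> / q)" by simp
  show ?thesis
  proof (cases "a \<le> \<delta> * t powr q")
    case True
    have "a * t powr \<beta> \<le> (\<delta> * t powr q) * t powr \<beta>"
      using True by (intro mult_right_mono) auto
    also have "\<dots> = \<delta> * t powr p"
      by (simp add: q_def powr_add[symmetric] mult.assoc)
    finally have "a * pw t \<beta> \<le> \<delta> * t powr p" using pw by simp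
    then show ?thesis using R unfolding q_def by linarith
  next
    case False
    then have lt: "t powr q < a / \<delta>" using d by (simp add: field_simps mult.commute)
    have apos: "0 < a" using False d t
      by (meson less_le_trans mult_nonneg_nonneg not_le powr_ge_zero less_eq_real_def)
    have "t powr \<beta> = (t powr q) powr (\<beta> / q)"
      using q by (simp add: powr_powr)
    also have "\<dots> \<le> (a / \<delta>) powr (\<beta> / q)"
      using lt b q by (intro powr_mono2) auto
    also have "\<dots> = a powr (\<beta> / q) * \<delta> powr (- \<beta> / q)"
      using apos d by (simp add: powr_divide powr_minus_divide divide_simps)
    finally have "a * t powr \<beta> \<le> a * (a powr (\<beta> / q) * \<delta> powr (- \<beta> / q))"
      using apos by (intro mult_left_mono) auto
    also have "\<dots> = a powr (p / q) * \<delta> powr (- \<beta> / q)"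
    proof -
      have "a * a powr (\<beta> / q) = a powr (1 + \<beta> / q)"
        using apos by (simp add: powr_add)
      also have "1 + \<beta> / q = p / q" using q by (simp add: q_def field_simps)
      finally show ?thesis by (simp add: mult.assoc[symmetric])
    qed
    finally show ?thesis using pw q_def d t
      by (smt (verit) mult_nonneg_nonneg powr_ge_zero)
  qed
qed

text \<open>The factor \<open>t^\<alpha>\<close> is bounded by \<open>(1+t^p)^(\<alpha>/p)\<close>; after Young's inequality its
  exponent becomes \<open>\<alpha>/(p-\<beta>) \<le> 1\<close> since \<open>\<alpha>+\<beta> \<le> p\<close>.\<close>
lemma scaled_cross_term_le:
  fixes s r p \<alpha> \<beta> Kp Km m t ty \<delta> :: real
  assumes s: "1 \<le> s" and qr: "p / (p - \<beta>) \<le> r" and b: "0 \<le> \<beta>" "\<beta> < p"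
    and al: "0 \<le> \<alpha>" "\<alpha> + \<beta> \<le> p"
    and K: "0 \<le> Kp" "0 \<le> Km" "0 \<le> m" and t: "0 \<le> t" "0 \<le> ty" and d: "0 < \<delta>"
  shows "s * (Kp * m + Km * pw t \<alpha>) * pw ty \<beta> \<le> \<delta> * ty powr p
     + s powr r * ((Kp * m + Km) powr (p / (p - \<beta>)) * \<delta> powr (- \<beta> / (p - \<beta>))) * (1 + t powr p)"
proof -
  define u where "u = 1 + t powr p"
  define q where "q = p / (p - \<beta>)"
  define G where "G = Kp * m + Km"
  have p: "0 < p" using b by simp
  have u1: "1 \<le> u" by (simp add: u_def)
  have q0: "0 \<le> q" using b by (simp add: q_def)
  have G0: "0 \<le> G" using K by (simp add: G_def)
  have ua: "1 \<le> u powr (\<alpha> / p)" using u1 al p by (simp add: ge_one_powr_ge_zero)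
  have E: "Kp * m + Km * pw t \<alpha> \<le> G * u powr (\<alpha> / p)"
  proof -
    have "pw t \<alpha> \<le> u powr (\<alpha> / p)" unfolding u_def
      using pw_le_one_plus_powr_powr[of t \<alpha> p] t al b by simp
    then have "Km * pw t \<alpha> \<le> Km * u powr (\<alpha> / p)" using K by (intro mult_left_mono) auto
    moreover have "Kp * m * 1 \<le> Kp * m * u powr (\<alpha> / p)" using ua K
      by (intro mult_left_mono) auto
    ultimately show ?thesis by (simp add: G_def distrib_right)
  qed
  have E0: "0 \<le> Kp * m + Km * pw t \<alpha>" using K pw_nonneg by simp
  have "s * (Kp * m + Km * pw t \<alpha>) * pw ty \<beta> \<le> \<delta> * ty powr p
     + (s * (Kp * m + Km * pw t \<alpha>)) powr q * \<delta> powr (- \<beta> / (p - \<beta>))"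
    unfolding q_def using mult_pw_le_young[of "s * (Kp * m + Km * pw t \<alpha>)" \<delta> ty \<beta> p] s E0 d t b by simp
  also have "(s * (Kp * m + Km * pw t \<alpha>)) powr q \<le> (s * (G * u powr (\<alpha> / p))) powr q"
    using E E0 s q0 by (intro powr_mono2 mult_left_mono) auto
  also have "\<dots> = s powr q * G powr q * u powr (\<alpha> / p * q)"
    using s G0 u1 by (simp add: powr_mult powr_powr)
  also have "\<dots> \<le> s powr r * G powr q * u"
  proof -
    have "s powr q \<le> s powr r" using s qr by (intro powr_mono) (auto simp: q_def)
    moreover have "u powr (\<alpha> / p * q) \<le> u powr 1"
      using u1 al b p by (intro powr_mono) (auto simp: q_def field_simps)
    ultimately show ?thesis using u1 s
      by (intro mult_mono) auto
  qed
  finally show ?thesis using d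
    by (simp add: u_def q_def G_def mult_right_mono mult.assoc mult.commute mult.left_commute)
qed


locale cost_growth =
  fixes mu :: "'a::polish_space measure" and nu :: "'b::polish_space measure"
    and x0 :: 'a and y0 :: 'b and c :: "'a \<Rightarrow> 'b \<Rightarrow> real"
    and c1 :: "'a \<Rightarrow> real" and c2 :: "'b \<Rightarrow> real" and chat :: "'a \<Rightarrow> 'b \<Rightarrow> real"
    and ap am :: "'a \<Rightarrow> real" and p lam M :: real and N :: nat
    and al be Kp Km :: "nat \<Rightarrow> real"
  assumes prob_mu: "prob_space mu" and sets_mu: "sets mu = sets borel"
    and prob_nu: "prob_space nu" and sets_nu: "sets nu = sets borel"
    and c_measurable: "(\<lambda>(x, y). c x y) \<in> borel_measurable (mu \<Otimes>\<^sub>M nu)"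
    and p_pos: "p > 0" and lam_pos: "lam > 0"
    and exp_moment_integrable: "integrable nu (\<lambda>y. exp (lam * dist y y0 powr p))"
    and exponents: "\<forall>i\<in>{1..N}. 0 \<le> al i \<and> al i \<le> p \<and> 0 \<le> be i \<and> be i < p \<and> al i + be i \<le> p"
    and coeffs_nonneg: "\<forall>i\<in>{1..N}. Kp i \<ge> 0 \<and> Km i \<ge> 0"
    and c1_integrable: "integrable mu c1" and c2_integrable: "integrable nu c2"
    and c_split: "\<forall>x y. c x y = c1 x + c2 y + chat x y"
    and ap_measurable: "ap \<in> borel_measurable mu" and am_measurable: "am \<in> borel_measurable mu"
    and ap_am_nonneg: "\<forall>x. ap x \<ge> 0 \<and> am x \<ge> 0"
    and ap_integrable: "integrable mu ap"
    and chat_lower: "\<forall>x y. - am x - (\<Sum>i=1..N. Km i * pw (dist x x0) (al i) * pw (dist y y0) (be i)) \<le> chat x y"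
    and chat_upper: "\<forall>x y. chat x y \<le> ap x + (\<Sum>i=1..N. Kp i * pw (dist x x0) (al i) * pw (dist y y0) (be i))"
    and dist_powr_integrable: "integrable mu (\<lambda>x. dist x x0 powr p)"
    and growth_x: "\<forall>x. \<bar>c1 x\<bar> + ap x + am x \<le> M * (1 + dist x x0 powr p)"
    and growth_y: "\<forall>y. \<bar>c2 y\<bar> \<le> M * (1 + dist y y0 powr p)"
begin

sublocale mu: prob_space mu by (fact prob_mu)
sublocale nu: prob_space nu by (fact prob_nu)

lemma exponent_bounds:
  assumes "i \<in> {1..N}"
  shows "0 \<le> al i" "al i \<le> p" "0 \<le> be i" "be i < p" "al i + be i \<le> p"
  using exponents assms by auto

lemma coeff_bounds:
  assumes "i \<in> {1..N}"
  shows "0 \<le> Kp i" "0 \<le> Km i"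
  using coeffs_nonneg assms by auto

lemma M_nonneg: "0 \<le> M"
proof -
  have "\<bar>c1 x0\<bar> + ap x0 + am x0 \<le> M"
    using growth_x[rule_format, of x0] by simp
  then show ?thesis
    using ap_am_nonneg by (smt (verit) abs_ge_zero)
qed

lemma c_upper:
  "c x y \<le> c1 x + ap x + (c2 y + (\<Sum>i=1..N. Kp i * pw (dist x x0) (al i) * pw (dist y y0) (be i)))"
  using c_split chat_upper by simp

lemma c_lower:
  "c1 x + c2 y - am x - (\<Sum>i=1..N. Km i * pw (dist x x0) (al i) * pw (dist y y0) (be i)) \<le> c x y"
  using c_split chat_lower[rule_format, of x y] by simp

lemma abs_c_le:
  "\<bar>c x y\<bar> \<le> \<bar>c1 x\<bar> + \<bar>c2 y\<bar> + ap x + am x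
     + (\<Sum>i=1..N. (Kp i + Km i) * pw (dist x x0) (al i) * pw (dist y y0) (be i))"
proof -
  have "0 \<le> (\<Sum>i=1..N. Kp i * pw (dist x x0) (al i) * pw (dist y y0) (be i))"
    "0 \<le> (\<Sum>i=1..N. Km i * pw (dist x x0) (al i) * pw (dist y y0) (be i))"
    using coeff_bounds by (auto intro!: sum_nonneg simp: pw_nonneg)
  moreover have "(\<Sum>i=1..N. (Kp i + Km i) * pw (dist x x0) (al i) * pw (dist y y0) (be i))
      = (\<Sum>i=1..N. Kp i * pw (dist x x0) (al i) * pw (dist y y0) (be i))
      + (\<Sum>i=1..N. Km i * pw (dist x x0) (al i) * pw (dist y y0) (be i))"
    by (simp add: distrib_right sum.distrib)
  ultimately show ?thesis
    using c_upper[of x y] c_lower[of x y] ap_am_nonneg by (smt (verit))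
qed

lemma borel_measurable_mu_eq: "borel_measurable mu = borel_measurable borel"
  by (rule measurable_cong_sets) (simp_all add: sets_mu)

lemma borel_measurable_nu_eq: "borel_measurable nu = borel_measurable borel"
  by (rule measurable_cong_sets) (simp_all add: sets_nu)

lemma integrable_pw_dist_x:
  assumes "0 \<le> a" "a \<le> p"
  shows "integrable mu (\<lambda>x. pw (dist x x0) a)"
proof (rule Bochner_Integration.integrable_bound[OF Bochner_Integration.integrable_add[OF mu.integrable_const[of 1] dist_powr_integrable]])
  show "(\<lambda>x. pw (dist x x0) a) \<in> borel_measurable mu"
    unfolding borel_measurable_mu_eq pw_def by measurable
qed (use assms p_pos in \<open>auto simp: pw_nonneg pw_le_one_plus_powr\<close>)

lemma integrable_dist_powr_y: "integrable nu (\<lambda>y. dist y y0 powr p)"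
proof (rule Bochner_Integration.integrable_bound[OF integrable_mult_right[of "1 / lam", OF exp_moment_integrable]])
  show "(\<lambda>y. dist y y0 powr p) \<in> borel_measurable nu"
    unfolding borel_measurable_nu_eq by measurable
  have "lam * dist y y0 powr p \<le> exp (lam * dist y y0 powr p)" for y
    using exp_ge_add_one_self[of "lam * dist y y0 powr p"] by linarith
  then show "AE y in nu. norm (dist y y0 powr p) \<le> norm (1 / lam * exp (lam * dist y y0 powr p))"
    using lam_pos by (intro AE_I2) (simp add: field_simps)
qed

lemma integrable_pw_dist_y:
  assumes "0 \<le> a" "a \<le> p"
  shows "integrable nu (\<lambda>y. pw (dist y y0) a)"
proof (rule Bochner_Integration.integrable_bound[OF Bochner_Integration.integrable_add[OF nu.integrable_const[of 1] integrable_dist_powr_y]])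
  show "(\<lambda>y. pw (dist y y0) a) \<in> borel_measurable nu"
    unfolding borel_measurable_nu_eq pw_def by measurable
qed (use assms p_pos in \<open>auto simp: pw_nonneg pw_le_one_plus_powr\<close>)

lemma integrable_pw_dist_al: "i \<in> {1..N} \<Longrightarrow> integrable mu (\<lambda>x. pw (dist x x0) (al i))"
  using exponent_bounds by (intro integrable_pw_dist_x) auto

lemma integrable_pw_dist_be: "i \<in> {1..N} \<Longrightarrow> integrable nu (\<lambda>y. pw (dist y y0) (be i))"
  using exponent_bounds by (intro integrable_pw_dist_y) (auto intro: less_imp_le)

lemma integrable_am: "integrable mu am"
proof (rule Bochner_Integration.integrable_bound[OF integrable_mult_right[of M,
        OF Bochner_Integration.integrable_add[OF mu.integrable_const[of 1] dist_powr_integrable]] am_measurable])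
  show "AE x in mu. norm (am x) \<le> norm (M * (1 + dist x x0 powr p))"
    using growth_x ap_am_nonneg M_nonneg by (intro AE_I2) (smt (verit) real_norm_def)
qed

lemma integrable_c_x: "integrable mu (\<lambda>x. c x y)"
proof (rule Bochner_Integration.integrable_bound)
  show "integrable mu (\<lambda>x. \<bar>c1 x\<bar> + \<bar>c2 y\<bar> + ap x + am x
      + (\<Sum>i=1..N. (Kp i + Km i) * pw (dist x x0) (al i) * pw (dist y y0) (be i)))"
    using c1_integrable ap_integrable integrable_am integrable_pw_dist_al
    by (intro Bochner_Integration.integrable_add Bochner_Integration.integrable_sum integrable_mult_left integrable_mult_right
        integrable_abs mu.integrable_const) auto
  show "(\<lambda>x. c x y) \<in> borel_measurable mu"
    using measurable_Pair1[OF c_measurable, of y] sets_eq_imp_space_eq[OF sets_nu] by simp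
  show "AE x in mu. norm (c x y) \<le> norm (\<bar>c1 x\<bar> + \<bar>c2 y\<bar> + ap x + am x
      + (\<Sum>i=1..N. (Kp i + Km i) * pw (dist x x0) (al i) * pw (dist y y0) (be i)))"
    using abs_c_le by (intro AE_I2) (auto intro: order_trans[OF _ abs_ge_self])
qed

lemma integrable_c_y: "integrable nu (\<lambda>y. c x y)"
proof (rule Bochner_Integration.integrable_bound)
  show "integrable nu (\<lambda>y. \<bar>c1 x\<bar> + \<bar>c2 y\<bar> + ap x + am x
      + (\<Sum>i=1..N. (Kp i + Km i) * pw (dist x x0) (al i) * pw (dist y y0) (be i)))"
    using c2_integrable integrable_pw_dist_be
    by (intro Bochner_Integration.integrable_add Bochner_Integration.integrable_sum integrable_mult_left integrable_mult_right
        integrable_abs nu.integrable_const) auto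
  show "(\<lambda>y. c x y) \<in> borel_measurable nu"
    using measurable_Pair2[OF c_measurable, of x] sets_eq_imp_space_eq[OF sets_mu] by simp
  show "AE y in nu. norm (c x y) \<le> norm (\<bar>c1 x\<bar> + \<bar>c2 y\<bar> + ap x + am x
      + (\<Sum>i=1..N. (Kp i + Km i) * pw (dist x x0) (al i) * pw (dist y y0) (be i)))"
    using abs_c_le by (intro AE_I2) (auto intro: order_trans[OF _ abs_ge_self])
qed

definition "moment_x i = (\<integral>x. pw (dist x x0) (al i) \<partial>mu)"
definition "moment_y i = (\<integral>y. pw (dist y y0) (be i) \<partial>nu)"
definition "exp_moment = (\<integral>y. exp (lam * dist y y0 powr p) \<partial>nu)"
definition "mean_x = integral\<^sup>L mu c1 + integral\<^sup>L mu ap"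
definition "scale_exponent = max (p / (p - Max (insert 0 (be ` {1..N})))) 1"
definition "young_weight = lam / (real N + 1)"
definition "young_const i = (Kp i * moment_x i + Km i) powr (p / (p - be i))
  * young_weight powr (- be i / (p - be i))"
definition "upper_const = M + \<bar>integral\<^sup>L nu c2\<bar> + (\<Sum>i=1..N. Kp i * moment_y i)"
definition "lower_const = \<bar>mean_x\<bar> + M + (\<Sum>i=1..N. young_const i) + ln exp_moment"
definition "bound_const = upper_const + lower_const"

lemma moment_x_nonneg: "0 \<le> moment_x i"
  unfolding moment_x_def by (simp add: pw_nonneg)

lemma moment_y_nonneg: "0 \<le> moment_y i"
  unfolding moment_y_def by (simp add: pw_nonneg)

lemma exp_moment_ge_1: "1 \<le> exp_moment"
proof -
  have "(\<integral>y. 1 \<partial>nu) \<le> exp_moment"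
    unfolding exp_moment_def using exp_moment_integrable lam_pos
    by (intro Bochner_Integration.integral_mono) (auto intro: nu.integrable_const)
  then show ?thesis by (simp add: nu.prob_space)
qed

lemma upper_const_nonneg: "0 \<le> upper_const"
  unfolding upper_const_def
  using M_nonneg coeff_bounds moment_y_nonneg by (auto intro!: sum_nonneg add_nonneg_nonneg)

lemma lower_const_nonneg: "0 \<le> lower_const"
  unfolding lower_const_def young_const_def
  using M_nonneg exp_moment_ge_1 by (auto intro!: sum_nonneg add_nonneg_nonneg)

lemma scale_exponent_ge: "1 \<le> scale_exponent" "i \<in> {1..N} \<Longrightarrow> p / (p - be i) \<le> scale_exponent"
proof -
  define Mx where "Mx = Max (insert 0 (be ` {1..N}))"
  have "Mx \<in> insert 0 (be ` {1..N})"
    unfolding Mx_def by (intro Max_in) auto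
  then have "Mx < p"
    using p_pos exponent_bounds by auto
  moreover assume "i \<in> {1..N}"
  then have "be i \<le> Mx"
    unfolding Mx_def by (intro Max_ge) auto
  ultimately have "p / (p - be i) \<le> p / (p - Mx)"
    using p_pos by (intro divide_left_mono) auto
  then show "p / (p - be i) \<le> scale_exponent"
    unfolding scale_exponent_def Mx_def by linarith
qed (simp add: scale_exponent_def)

lemma integral_c_x_le:
  "(\<integral>x. c x y \<partial>mu) \<le> mean_x + c2 y + (\<Sum>i=1..N. Kp i * moment_x i * pw (dist y y0) (be i))"
proof -
  have int_sum: "integrable mu (\<lambda>x. \<Sum>i=1..N. Kp i * pw (dist x x0) (al i) * pw (dist y y0) (be i))"
    using integrable_pw_dist_al
    by (intro Bochner_Integration.integrable_sum integrable_mult_left integrable_mult_right) auto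
  have "(\<integral>x. c x y \<partial>mu)
      \<le> (\<integral>x. c1 x + ap x + (c2 y + (\<Sum>i=1..N. Kp i * pw (dist x x0) (al i) * pw (dist y y0) (be i))) \<partial>mu)"
    using c1_integrable ap_integrable int_sum by (intro Bochner_Integration.integral_mono integrable_c_x c_upper) auto
  also have "\<dots> = mean_x + c2 y + (\<Sum>i=1..N. Kp i * moment_x i * pw (dist y y0) (be i))"
    using c1_integrable ap_integrable int_sum integrable_pw_dist_al
    by (simp add: Bochner_Integration.integral_sum mean_x_def moment_x_def mu.prob_space)
  finally show ?thesis .
qed

lemma integral_c_y_le: "(\<integral>y. c z y \<partial>nu) \<le> upper_const * (1 + dist z x0 powr p)"
proof -
  define u where "u = 1 + dist z x0 powr p"
  have int_sum: "integrable nu (\<lambda>y. \<Sum>i=1..N. Kp i * pw (dist z x0) (al i) * pw (dist y y0) (be i))"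
    using integrable_pw_dist_be
    by (intro Bochner_Integration.integrable_sum integrable_mult_left integrable_mult_right) auto
  have "(\<integral>y. c z y \<partial>nu)
      \<le> (\<integral>y. c1 z + ap z + (c2 y + (\<Sum>i=1..N. Kp i * pw (dist z x0) (al i) * pw (dist y y0) (be i))) \<partial>nu)"
    using c2_integrable int_sum by (intro Bochner_Integration.integral_mono integrable_c_y c_upper) auto
  also have "\<dots> = c1 z + ap z + (integral\<^sup>L nu c2 + (\<Sum>i=1..N. Kp i * pw (dist z x0) (al i) * moment_y i))"
    using c2_integrable int_sum integrable_pw_dist_be
    by (simp add: Bochner_Integration.integral_sum moment_y_def nu.prob_space)
  also have "\<dots> \<le> upper_const * u"
  proof -
    have "c1 z + ap z \<le> M * u"
      using growth_x ap_am_nonneg by (smt (verit) u_def)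
    moreover have "integral\<^sup>L nu c2 \<le> \<bar>integral\<^sup>L nu c2\<bar> * u"
      by (smt (verit) u_def abs_ge_zero mult_le_cancel_left1 powr_ge_zero)
    moreover have "(\<Sum>i=1..N. Kp i * pw (dist z x0) (al i) * moment_y i) \<le> (\<Sum>i=1..N. Kp i * moment_y i) * u"
      unfolding sum_distrib_right
    proof (rule sum_mono)
      fix i assume i: "i \<in> {1..N}"
      have "pw (dist z x0) (al i) \<le> u"
        unfolding u_def using exponent_bounds[OF i] p_pos by (intro pw_le_one_plus_powr) auto
      then show "Kp i * pw (dist z x0) (al i) * moment_y i \<le> Kp i * moment_y i * u"
        using coeff_bounds[OF i] moment_y_nonneg[of i]
        by (metis mult.commute mult.left_commute mult_left_mono mult_nonneg_nonneg)
    qed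
    ultimately show ?thesis
      unfolding upper_const_def by (simp add: distrib_right)
  qed
  finally show ?thesis by (simp add: u_def)
qed

text \<open>The Young weight is chosen so that the \<open>N\<close> terms \<open>young_weight * |y|^p\<close> together stay
  below \<open>lam * |y|^p\<close>, which is integrable against \<open>exp\<close> by the exponential moment assumption.\<close>
lemma scaled_cost_gap_le:
  assumes s: "1 \<le> s"
  shows "s * (mean_x + c2 y + (\<Sum>i=1..N. Kp i * moment_x i * pw (dist y y0) (be i))) - s * c z y
    \<le> s powr scale_exponent * (lower_const - ln exp_moment) * (1 + dist z x0 powr p)
       + lam * dist y y0 powr p"
proof -
  define u where "u = 1 + dist z x0 powr p"
  define \<delta> where "\<delta> = young_weight"
  have u1: "1 \<le> u" by (simp add: u_def)
  have sr: "s \<le> s powr scale_exponent"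
    using powr_mono[OF scale_exponent_ge(1) s] s by simp
  have \<delta>_pos: "0 < \<delta>" and N\<delta>: "real N * \<delta> \<le> lam"
    using lam_pos by (simp_all add: \<delta>_def young_weight_def field_simps)
  have cross: "(\<Sum>i=1..N. s * (Kp i * moment_x i + Km i * pw (dist z x0) (al i)) * pw (dist y y0) (be i))
      \<le> real N * \<delta> * dist y y0 powr p + s powr scale_exponent * (\<Sum>i=1..N. young_const i) * u"
  proof -
    have "(\<Sum>i=1..N. s * (Kp i * moment_x i + Km i * pw (dist z x0) (al i)) * pw (dist y y0) (be i))
        \<le> (\<Sum>i=1..N. \<delta> * dist y y0 powr p + s powr scale_exponent * young_const i * u)"
    proof (rule sum_mono)
      fix i assume i: "i \<in> {1..N}"
      show "s * (Kp i * moment_x i + Km i * pw (dist z x0) (al i)) * pw (dist y y0) (be i)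
          \<le> \<delta> * dist y y0 powr p + s powr scale_exponent * young_const i * u"
        unfolding young_const_def u_def \<delta>_def[symmetric]
        using scaled_cross_term_le[OF s scale_exponent_ge(2)[OF i] exponent_bounds(3,4)[OF i]
            exponent_bounds(1,5)[OF i] coeff_bounds[OF i] moment_x_nonneg
            zero_le_dist zero_le_dist \<delta>_pos] .
    qed
    then show ?thesis
      by (simp add: sum.distrib sum_distrib_left sum_distrib_right)
  qed
  have "real N * \<delta> * dist y y0 powr p \<le> lam * dist y y0 powr p"
    using N\<delta> by (intro mult_right_mono) auto
  moreover have "s * (mean_x - c1 z + am z) \<le> s powr scale_exponent * (\<bar>mean_x\<bar> + M) * u"
  proof -
    have "mean_x - c1 z + am z \<le> (\<bar>mean_x\<bar> + M) * u"
      using growth_x ap_am_nonneg u1 by (smt (verit) u_def mult_le_cancel_left1 distrib_right)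
    then have "s * (mean_x - c1 z + am z) \<le> s * ((\<bar>mean_x\<bar> + M) * u)"
      using s by (intro mult_left_mono) auto
    also have "\<dots> \<le> s powr scale_exponent * ((\<bar>mean_x\<bar> + M) * u)"
      using sr M_nonneg u1 by (intro mult_right_mono) auto
    finally show ?thesis by (simp add: mult.assoc)
  qed
  moreover have "s * (c1 z + c2 y - am z - (\<Sum>i=1..N. Km i * pw (dist z x0) (al i) * pw (dist y y0) (be i)))
      \<le> s * c z y"
    using c_lower s by (intro mult_left_mono) auto
  moreover have "s * (\<Sum>i=1..N. Kp i * moment_x i * pw (dist y y0) (be i))
      + s * (\<Sum>i=1..N. Km i * pw (dist z x0) (al i) * pw (dist y y0) (be i))
      = (\<Sum>i=1..N. s * (Kp i * moment_x i + Km i * pw (dist z x0) (al i)) * pw (dist y y0) (be i))"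
    by (simp add: sum_distrib_left sum.distrib[symmetric] algebra_simps)
  ultimately show ?thesis
    using cross unfolding lower_const_def u_def by (simp add: algebra_simps)
qed


context
  fixes s :: real and f :: "'a \<Rightarrow> real"
  assumes scale: "1 \<le> s" and f_integrable: "integrable mu f"
    and fc_L1: "ereal_L1 nu (cconj mu (\<lambda>x y. s * c x y) (\<lambda>x. ereal (f x)))"
begin

abbreviation "fc \<equiv> cconj mu (\<lambda>x y. s * c x y) (\<lambda>x. ereal (f x))"

lemma fc_integrable: "integrable nu (\<lambda>y. real_of_ereal (fc y))"
  using fc_L1 by (simp add: ereal_L1_def)

lemma fc_AE_finite: "AE y in nu. fc y = ereal (real_of_ereal (fc y))"
proof -
  have "AE y in nu. \<bar>fc y\<bar> \<noteq> \<infinity>"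
    using fc_L1 by (simp add: ereal_L1_def)
  then show ?thesis
    by eventually_elim (simp add: ereal_real')
qed

lemma fc_le:
  "fc y \<le> ereal ((\<integral>x. negpart (f x) \<partial>mu)
     + s * (mean_x + c2 y + (\<Sum>i=1..N. Kp i * moment_x i * pw (dist y y0) (be i))))"
proof -
  have "fc y \<le> ereal ((\<integral>x. s * c x y \<partial>mu) - integral\<^sup>L mu f)"
    using f_integrable integrable_c_x by (intro cconj_le_integral prob_mu) auto
  also have "(\<integral>x. s * c x y \<partial>mu) - integral\<^sup>L mu f
      \<le> (\<integral>x. negpart (f x) \<partial>mu) + s * (mean_x + c2 y + (\<Sum>i=1..N. Kp i * moment_x i * pw (dist y y0) (be i)))"
  proof -
    have "s * (\<integral>x. c x y \<partial>mu)
        \<le> s * (mean_x + c2 y + (\<Sum>i=1..N. Kp i * moment_x i * pw (dist y y0) (be i)))"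
      using integral_c_x_le scale by (intro mult_left_mono) auto
    then show ?thesis
      using integral_ge_neg_integral_negpart[OF f_integrable] by simp
  qed
  finally show ?thesis by simp
qed

lemma fcc_le:
  "ccconj nu (\<lambda>x y. s * c x y) fc z
     \<le> ereal ((\<integral>y. negpart (real_of_ereal (fc y)) \<partial>nu)
        + s powr scale_exponent * upper_const * (1 + dist z x0 powr p))"
proof -
  have "ccconj nu (\<lambda>x y. s * c x y) fc z
      \<le> ereal ((\<integral>y. s * c z y \<partial>nu) - (\<integral>y. real_of_ereal (fc y) \<partial>nu))"
    unfolding ccconj_eq_cconj using fc_integrable integrable_c_y fc_AE_finite
    by (intro cconj_le_integral prob_nu) auto
  also have "(\<integral>y. s * c z y \<partial>nu) \<le> s powr scale_exponent * upper_const * (1 + dist z x0 powr p)"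
  proof -
    have "s * (\<integral>y. c z y \<partial>nu) \<le> s * (upper_const * (1 + dist z x0 powr p))"
      using integral_c_y_le scale by (intro mult_left_mono) auto
    also have "\<dots> \<le> s powr scale_exponent * (upper_const * (1 + dist z x0 powr p))"
      using powr_mono[OF scale_exponent_ge(1) scale] scale upper_const_nonneg
      by (intro mult_right_mono) auto
    finally show ?thesis by (simp add: mult.assoc)
  qed
  finally show ?thesis
    using integral_ge_neg_integral_negpart[OF fc_integrable]
    by (simp add: order_trans)
qed

lemma fcc_ge:
  "- ereal ((\<integral>x. negpart (f x) \<partial>mu) + s powr scale_exponent * lower_const * (1 + dist z x0 powr p))
     \<le> ccconj nu (\<lambda>x y. s * c x y) fc z"
proof -
  define \<Phi> where "\<Phi> = (\<integral>x. negpart (f x) \<partial>mu)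
    + s powr scale_exponent * (lower_const - ln exp_moment) * (1 + dist z x0 powr p)"
  have "fc y - ereal (s * c z y) \<le> ereal (\<Phi> + lam * dist y y0 powr p)" for y
  proof -
    have "fc y - ereal (s * c z y)
        \<le> ereal ((\<integral>x. negpart (f x) \<partial>mu)
          + s * (mean_x + c2 y + (\<Sum>i=1..N. Kp i * moment_x i * pw (dist y y0) (be i)))) - ereal (s * c z y)"
      using fc_le by (rule ereal_minus_mono) simp
    also have "\<dots> \<le> ereal (\<Phi> + lam * dist y y0 powr p)"
      using scaled_cost_gap_le[OF scale, of y z] by (simp add: \<Phi>_def)
    finally show ?thesis .
  qed
  then have "- ereal (\<Phi> + ln exp_moment) \<le> ccconj nu (\<lambda>x y. s * c x y) fc z"
    unfolding ccconj_eq_cconj exp_moment_def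
    using exp_moment_integrable exp_moment_ge_1[unfolded exp_moment_def] by (intro cconj_ge) auto
  moreover have "ln exp_moment \<le> s powr scale_exponent * ln exp_moment * (1 + dist z x0 powr p)"
  proof -
    have "1 \<le> s powr scale_exponent"
      using scale scale_exponent_ge(1) by (simp add: ge_one_powr_ge_zero)
    then have "1 * 1 \<le> s powr scale_exponent * (1 + dist z x0 powr p)"
      by (intro mult_mono) auto
    then have "ln exp_moment * 1 \<le> ln exp_moment * (s powr scale_exponent * (1 + dist z x0 powr p))"
      using exp_moment_ge_1 by (intro mult_left_mono) auto
    then show ?thesis
      by (simp add: mult_ac)
  qed
  ultimately show ?thesis
    unfolding \<Phi>_def by (smt (verit) ereal_less_eq(3) ereal_minus_le_minus order_trans right_diff_distrib left_diff_distrib)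
qed

end

lemma conj_bound_scaled:
  assumes "1 \<le> s"
  shows "conj_bound mu nu (\<lambda>x y. s * c x y) x0 p (s powr scale_exponent * bound_const)"
  unfolding conj_bound_def
proof (intro allI impI)
  fix f :: "'a \<Rightarrow> real" and z
  assume f: "integrable mu f" and fc: "ereal_L1 nu (cconj mu (\<lambda>x y. s * c x y) (\<lambda>x. ereal (f x)))"
  have "0 \<le> s powr scale_exponent * upper_const * (1 + dist z x0 powr p)"
    "0 \<le> s powr scale_exponent * lower_const * (1 + dist z x0 powr p)"
    using upper_const_nonneg lower_const_nonneg by auto
  moreover have "0 \<le> (\<integral>x. negpart (f x) \<partial>mu)"
    "0 \<le> (\<integral>y. negpart (real_of_ereal (cconj mu (\<lambda>x y. s * c x y) (\<lambda>x. ereal (f x)) y)) \<partial>nu)"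
    by (simp_all add: negpart_def)
  ultimately show "\<bar>ccconj nu (\<lambda>x y. s * c x y) (cconj mu (\<lambda>x y. s * c x y) (\<lambda>x. ereal (f x))) z\<bar>
      \<le> ereal ((\<integral>x. negpart (f x) \<partial>mu)
        + (\<integral>y. negpart (real_of_ereal (cconj mu (\<lambda>x y. s * c x y) (\<lambda>x. ereal (f x)) y)) \<partial>nu)
        + s powr scale_exponent * bound_const * (1 + dist z x0 powr p))"
    by (intro abs_ereal_le_if_bounds[OF fcc_le[OF assms f fc] fcc_ge[OF assms f fc]])
      (simp_all add: bound_const_def algebra_simps)
qed

end

theorem theorem5p7:
  fixes mu :: "'a::polish_space measure" and nu :: "'b::polish_space measure"
    and x0 :: 'a and y0 :: 'b and c :: "'a \<Rightarrow> 'b \<Rightarrow> real"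
    and c1 :: "'a \<Rightarrow> real" and c2 :: "'b \<Rightarrow> real" and chat :: "'a \<Rightarrow> 'b \<Rightarrow> real"
    and ap am :: "'a \<Rightarrow> real" and p lam M :: real and N :: nat
    and al be Kp Km :: "nat \<Rightarrow> real"
  assumes "prob_space mu" and "sets mu = sets borel"
    and "prob_space nu" and "sets nu = sets borel"
    and "(\<lambda>(x, y). c x y) \<in> borel_measurable (mu \<Otimes>\<^sub>M nu)"
    and "p > 0" and "lam > 0"
    and "integrable nu (\<lambda>y. exp (lam * dist y y0 powr p))"
    and "\<forall>i\<in>{1..N}. 0 \<le> al i \<and> al i \<le> p \<and> 0 \<le> be i \<and> be i < p \<and> al i + be i \<le> p"
    and "\<forall>i\<in>{1..N}. Kp i \<ge> 0 \<and> Km i \<ge> 0"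
    and "integrable mu c1" and "integrable nu c2"
    and "\<forall>x y. c x y = c1 x + c2 y + chat x y"
    and "ap \<in> borel_measurable mu" and "am \<in> borel_measurable mu"
    and "\<forall>x. ap x \<ge> 0 \<and> am x \<ge> 0"
    and "integrable mu ap"
    and "\<forall>x y. - am x - (\<Sum>i=1..N. Km i * pw (dist x x0) (al i) * pw (dist y y0) (be i)) \<le> chat x y"
    and "\<forall>x y. chat x y \<le> ap x + (\<Sum>i=1..N. Kp i * pw (dist x x0) (al i) * pw (dist y y0) (be i))"
    and "integrable mu (\<lambda>x. dist x x0 powr p)"
    and "\<forall>x. \<bar>c1 x\<bar> + ap x + am x \<le> M * (1 + dist x x0 powr p)"
    and "\<forall>y. \<bar>c2 y\<bar> \<le> M * (1 + dist y y0 powr p)"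
  shows "\<exists>K. conj_bound mu nu c x0 p K \<and>
           (\<forall>\<epsilon>. 0 < \<epsilon> \<and> \<epsilon> < 1 \<longrightarrow>
              conj_bound mu nu (\<lambda>x y. c x y / \<epsilon>) x0 p
                (\<epsilon> powr (- max (p / (p - Max (insert 0 (be ` {1..N})))) 1) * K))"
proof -
  interpret cost_growth mu nu x0 y0 c c1 c2 chat ap am p lam M N al be Kp Km
    by (rule cost_growth.intro) (fact assms)+
  show ?thesis
  proof (intro exI conjI allI impI)
    show "conj_bound mu nu c x0 p bound_const"
      using conj_bound_scaled[of 1] by simp
    fix \<epsilon> :: real
    assume \<epsilon>: "0 < \<epsilon> \<and> \<epsilon> < 1"
    then have "conj_bound mu nu (\<lambda>x y. 1 / \<epsilon> * c x y) x0 p ((1 / \<epsilon>) powr scale_exponent * bound_const)"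
      by (intro conj_bound_scaled) simp
    moreover have "(1 / \<epsilon>) powr scale_exponent = \<epsilon> powr (- scale_exponent)"
      using \<epsilon> by (simp add: powr_divide powr_minus_divide)
    ultimately show "conj_bound mu nu (\<lambda>x y. c x y / \<epsilon>) x0 p
        (\<epsilon> powr (- max (p / (p - Max (insert 0 (be ` {1..N})))) 1) * bound_const)"
      by (simp add: scale_exponent_def)
  qed
qed

end
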